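(* Let $x_s<x_t$ be integers, let $C\ge 0$, and let $f:[x_s,x_t]\to\mathbb{R}$ be such that $([x_s,x_t],f)$ is an Ameso($C$) pair. If there exist $x'\in[x_s,x_t]$ and $z\in[x_s,x')$ with $f(z)-f(x')\ge C$, then $\min_{y\in[z,x_t]}f(y)=\min_{y\in[x_s,x_t]}f(y)$.
   Context: For integers $a\le b$, $[a,b]$ denotes the set of integers $\{a,\dots,b\}$ and $[a,b)$ the set $\{a,\dots,b-1\}$. Floors and ceilings of vectors are taken componentwise. A set $D^n\subseteq\mathbb{Z}^n$ is an Ameso set if $\lceil(\vec x+\vec y)/2\rceil,\lfloor(\vec x+\vec y)/2\rfloor\in D^n$ for all $\vec x,\vec y\in D^n$. For $C\ge 0$, $(D^n,f)$ is an Ameso($C$) pair if $D^n$ is an Ameso set, $f:D^n\to\mathbb{R}$ is bounded below, and $f(\vec x)+f(\vec y)+C\ge f(\lceil(\vec x+\vec y)/2\rceil)+f(\lfloor(\vec x+\vec y)/2\rfloor)$ for all $\vec x,\vec y\in D^n$. *)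

theory Defs
  imports Main Complex_Main
begin

text \<open>Ameso sets and Ameso(C) pairs in dimension n = 1 (subsets of the integers).
  Floors and ceilings of the midpoint are taken of the real number (x+y)/2.\<close>

definition ameso_set :: "int set \<Rightarrow> bool" where
  "ameso_set D \<longleftrightarrow>
     (\<forall>x\<in>D. \<forall>y\<in>D. \<lceil>real_of_int (x + y) / 2\<rceil> \<in> D \<and> \<lfloor>real_of_int (x + y) / 2\<rfloor> \<in> D)"

definition ameso_pair :: "real \<Rightarrow> int set \<Rightarrow> (int \<Rightarrow> real) \<Rightarrow> bool" where
  "ameso_pair C D f \<longleftrightarrow>
     ameso_set D \<and> bdd_below (f ` D) \<and>
     (\<forall>x\<in>D. \<forall>y\<in>D. f x + f y + C \<ge>
         f \<lceil>real_of_int (x + y) / 2\<rceil> + f \<lfloor>real_of_int (x + y) / 2\<rfloor>)"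

end

theory Submission
  imports Defs
begin

text \<open>Let \<open>y\<close> minimise \<open>f\<close> on \<open>[x\<^sub>s,x\<^sub>t]\<close>; if \<open>y \<ge> z\<close> there is nothing to show.
  Otherwise \<open>y < z < x'\<close>, and the Ameso inequality yields a maximum principle up to \<open>C\<close>
  on \<open>[y,x']\<close>: take the leftmost maximiser \<open>p\<close> of \<open>f\<close> there and reflect the nearer
  endpoint through \<open>p\<close>. As \<open>f z \<ge> f x' + C\<close>, the right endpoint cannot win, so
  \<open>f x' + C \<le> f z \<le> f y + C\<close> and \<open>x' \<in> [z,x\<^sub>t]\<close> is itself a global minimiser.\<close>

lemma ameso_pair_midpoint_le:
  assumes "ameso_pair C D f" "a \<in> D" "b \<in> D" "a + b = 2 * p"
  shows "2 * f p \<le> f a + f b + C"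
proof -
  have "real_of_int (a + b) / 2 = real_of_int p"
    using assms(4) by simp
  then show ?thesis
    using assms(1-3) unfolding ameso_pair_def by fastforce
qed

lemma obtain_leftmost_maximizer:
  fixes f :: "'a::linorder \<Rightarrow> 'b::linorder"
  assumes "finite S" "S \<noteq> {}"
  obtains p where "p \<in> S" "\<forall>w\<in>S. f w \<le> f p" "\<forall>w\<in>S. w < p \<longrightarrow> f w < f p"
proof -
  define T where "T = {w\<in>S. f w = Max (f ` S)}"
  have "Max (f ` S) \<in> f ` S"
    using assms by simp
  then have "finite T" "T \<noteq> {}"
    using assms(1) by (auto simp: T_def)
  then have "Min T \<in> T" and Min_le_T: "\<forall>w\<in>T. Min T \<le> w"
    by simp_all
  have le_Max: "\<forall>w\<in>S. f w \<le> Max (f ` S)"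
    using assms(1) by simp
  show ?thesis
  proof (rule that)
    show "Min T \<in> S" "\<forall>w\<in>S. f w \<le> f (Min T)"
      using \<open>Min T \<in> T\<close> le_Max by (simp_all add: T_def)
    show "\<forall>w\<in>S. w < Min T \<longrightarrow> f w < f (Min T)"
    proof (intro ballI impI)
      fix w assume "w \<in> S" "w < Min T"
      then have "f w \<noteq> Max (f ` S)"
        using Min_le_T by (force simp: T_def)
      then show "f w < f (Min T)"
        using \<open>w \<in> S\<close> \<open>Min T \<in> T\<close> le_Max by (simp add: T_def order.strict_iff_order)
    qed
  qed
qed

lemma ameso_pair_max_principle:
  fixes l r w :: int
  assumes f: "ameso_pair C D f" and "{l..r} \<subseteq> D" and "C \<ge> 0"
    and "l \<le> w" "w < r" and w_large: "f r + C \<le> f w"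
  shows "f w \<le> f l + C"
proof -
  obtain p where p: "p \<in> {l..r}" and p_max: "\<forall>u\<in>{l..r}. f u \<le> f p"
    and p_leftmost: "\<forall>u\<in>{l..r}. u < p \<longrightarrow> f u < f p"
    using obtain_leftmost_maximizer[of "{l..r}" f] \<open>l \<le> w\<close> \<open>w < r\<close> by auto
  have "f w \<le> f p"
    using p_max \<open>l \<le> w\<close> \<open>w < r\<close> by simp
  have "p \<noteq> r"
    using p_leftmost \<open>l \<le> w\<close> \<open>w < r\<close> w_large \<open>C \<ge> 0\<close> by force
  show ?thesis
  proof (cases "p - l \<le> r - p")
    case True
    have "2 * f p \<le> f l + f (2 * p - l) + C"
      using True p assms(2) by (intro ameso_pair_midpoint_le[OF f]) auto
    moreover have "f (2 * p - l) \<le> f p"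
      using True p p_max by simp
    ultimately show ?thesis
      using \<open>f w \<le> f p\<close> by linarith
  next
    case False
    have "2 * f p \<le> f (2 * p - r) + f r + C"
      using False p assms(2) by (intro ameso_pair_midpoint_le[OF f]) auto
    moreover have "f (2 * p - r) < f p"
      using False p p_leftmost \<open>p \<noteq> r\<close> by simp
    ultimately show ?thesis
      using \<open>f w \<le> f p\<close> w_large by linarith
  qed
qed

theorem corollary3:
  fixes xs xt z x' :: int and C :: real and f :: "int \<Rightarrow> real"
  assumes "xs < xt"
    and "C \<ge> 0"
    and "ameso_pair C {xs..xt} f"
    and "x' \<in> {xs..xt}"
    and "z \<in> {xs..<x'}"
    and "f z - f x' \<ge> C"
  shows "Min (f ` {z..xt}) = Min (f ` {xs..xt})"
proof -
  have "Min (f ` {xs..xt}) \<in> f ` {xs..xt}"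
    using assms(1) by (intro Min_in) auto
  then obtain y where y: "y \<in> {xs..xt}" and y_Min: "f y = Min (f ` {xs..xt})"
    by auto
  have "\<exists>u\<in>{z..xt}. f u \<le> f y"
  proof (cases "z \<le> y")
    case True
    then show ?thesis
      using y by auto
  next
    case False
    have "f z \<le> f y + C"
    proof (rule ameso_pair_max_principle[OF assms(3)])
      show "{y..x'} \<subseteq> {xs..xt}"
        using y assms(4) by auto
    qed (use False assms(2,5,6) in auto)
    then show ?thesis
      using assms(4-6) by (intro bexI[of _ x']) auto
  qed
  then have "Min (f ` {z..xt}) \<le> f y"
    by (subst Min_le_iff) auto
  moreover have "Min (f ` {xs..xt}) \<le> Min (f ` {z..xt})"
    using assms(4,5) by (intro Min_antimono image_mono) auto
  ultimately show ?thesis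
    using y_Min by linarith
qed

end
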